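(* Let $c>0$ and $0<p\le 1$, and define the hybrid ordinary-$\ell_p$ (HOP) function $l_{p,c}:\mathbb{R}\to\mathbb{R}$ by $$l_{p,c}(x)=\begin{cases} x^2/2, & |x|\le c,\\ \frac{1}{p}c^{2-p}|x|^p+\frac{c^2}{2}-\frac{1}{p}c^2, & |x|>c.\end{cases}$$ Define the (extended-real-valued) implicit regularizer $\varphi_{p,c}(y)=\sup_{t\in\mathbb{R}}\big[l_{p,c}(t)-\tfrac{(t-y)^2}{2}\big]$. Then for every $x\in\mathbb{R}$, $$l_{p,c}(x)=\min_{y\in\mathbb{R}}\ \frac{(x-y)^2}{2}+\varphi_{p,c}(y),$$ and this minimum is attained uniquely at $$y^\star=P_{\varphi_{p,c}}(x):=\max\{0,\ |x|-c^{2-p}|x|^{p-1}\}\cdot\operatorname{sign}(x),$$ with the convention $P_{\varphi_{p,c}}(0)=0$.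
   Context: $\operatorname{sign}(x)$ denotes the sign of $x$ (with $\operatorname{sign}(0)=0$). The function $l_{p,c}$ is continuously differentiable; for $p=1$ it is the Huber function. *)

theory Defs
  imports "HOL-Analysis.Analysis"
begin

definition hop :: "real \<Rightarrow> real \<Rightarrow> real \<Rightarrow> real" where
  "hop p c x = (if \<bar>x\<bar> \<le> c then x\<^sup>2 / 2
     else (1 / p) * c powr (2 - p) * \<bar>x\<bar> powr p + c\<^sup>2 / 2 - (1 / p) * c\<^sup>2)"

definition hop_reg :: "real \<Rightarrow> real \<Rightarrow> real \<Rightarrow> ereal" where
  "hop_reg p c y = (SUP t\<in>UNIV. ereal (hop p c t - (t - y)\<^sup>2 / 2))"

definition hop_prox :: "real \<Rightarrow> real \<Rightarrow> real \<Rightarrow> real" where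
  "hop_prox p c x = (if x = 0 then 0
     else max 0 (\<bar>x\<bar> - c powr (2 - p) * \<bar>x\<bar> powr (p - 1)) * sgn x)"

end

theory Submission
  imports Defs
begin

text \<open>
  Put \<open>g(t) = t\<^sup>2/2 - l(t)\<close>. Then \<open>l(t) - (t - y)\<^sup>2/2 = t y - g(t) - y\<^sup>2/2\<close>, so the implicit
  regularizer is \<open>g\<^sup>*(y) - y\<^sup>2/2\<close> with \<open>g\<^sup>*\<close> the convex conjugate of \<open>g\<close>.
  For the HOP function \<open>g\<close> is \<open>C\<^sup>1\<close> with \<open>g' = P\<close>, and \<open>P\<close> is nondecreasing, so \<open>g\<close> is convex.
  The tangent inequality at \<open>x\<close> shows that the supremum defining the regularizer at \<open>P(x)\<close>
  is attained at \<open>t = x\<close>, which gives the identity; the inequality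
  \<open>l(x) \<le> (x - y)\<^sup>2/2 + \<phi>(y)\<close> holds for every \<open>y\<close> by taking \<open>t = x\<close> in the supremum;
  and if \<open>y\<close> attains the minimum, then \<open>t = x\<close> maximizes \<open>t y - g(t)\<close>, whence \<open>y = g'(x) = P(x)\<close>.
\<close>

definition implicit_reg :: "(real \<Rightarrow> real) \<Rightarrow> real \<Rightarrow> ereal" where
  "implicit_reg l y = (SUP t. ereal (l t - (t - y)\<^sup>2 / 2))"

lemma implicit_reg_ge: "ereal (l t - (t - y)\<^sup>2 / 2) \<le> implicit_reg l y"
  unfolding implicit_reg_def by (rule SUP_upper) simp

lemma le_quadratic_plus_implicit_reg: "ereal (l x) \<le> ereal ((x - y)\<^sup>2 / 2) + implicit_reg l y"
proof -
  have "ereal (l x) = ereal ((x - y)\<^sup>2 / 2) + ereal (l x - (x - y)\<^sup>2 / 2)"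
    by simp
  also have "\<dots> \<le> ereal ((x - y)\<^sup>2 / 2) + implicit_reg l y"
    by (intro add_left_mono implicit_reg_ge)
  finally show ?thesis .
qed

lemma quadratic_gap_eq:
  fixes l :: "real \<Rightarrow> real"
  shows "l t - (t - y)\<^sup>2 / 2 = t * y - (t\<^sup>2 / 2 - l t) - y\<^sup>2 / 2"
  by (simp add: power2_eq_square field_simps)

lemma implicit_reg_at_gradient:
  fixes l P :: "real \<Rightarrow> real"
  assumes deriv: "\<And>t. ((\<lambda>t. t\<^sup>2 / 2 - l t) has_real_derivative P t) (at t)" and "mono P"
  shows "implicit_reg l (P x) = ereal (l x - (x - P x)\<^sup>2 / 2)"
proof (rule antisym)
  have "convex_on UNIV (\<lambda>t. t\<^sup>2 / 2 - l t)"
    using deriv \<open>mono P\<close> by (intro convex_on_realI[where f' = P]) (auto dest: monoD)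
  then have tangent: "P x * (t - x) \<le> (t\<^sup>2 / 2 - l t) - (x\<^sup>2 / 2 - l x)" for t
    using deriv by (intro convex_on_imp_above_tangent) auto
  show "implicit_reg l (P x) \<le> ereal (l x - (x - P x)\<^sup>2 / 2)"
    unfolding implicit_reg_def
  proof (rule SUP_least)
    fix t
    show "ereal (l t - (t - P x)\<^sup>2 / 2) \<le> ereal (l x - (x - P x)\<^sup>2 / 2)"
      using tangent[of t] unfolding quadratic_gap_eq[of l] by (simp add: algebra_simps)
  qed
qed (rule implicit_reg_ge)

lemma implicit_reg_minimizer_eq_gradient:
  fixes l P :: "real \<Rightarrow> real"
  assumes deriv: "\<And>t. ((\<lambda>t. t\<^sup>2 / 2 - l t) has_real_derivative P t) (at t)"
    and min: "ereal ((x - y)\<^sup>2 / 2) + implicit_reg l y = ereal (l x)"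
  shows "y = P x"
proof -
  have reg: "implicit_reg l y = ereal (l x - (x - y)\<^sup>2 / 2)"
    using min by (cases "implicit_reg l y") (auto simp: algebra_simps)
  have "(x\<^sup>2 / 2 - l x) - x * y \<le> (t\<^sup>2 / 2 - l t) - t * y" for t
    using implicit_reg_ge[of l t y] unfolding reg quadratic_gap_eq[of l] by simp
  moreover have "((\<lambda>t. t * y) has_real_derivative y) (at x)"
    by (auto intro!: derivative_eq_intros)
  then have "((\<lambda>t. (t\<^sup>2 / 2 - l t) - t * y) has_real_derivative P x - y) (at x)"
    by (rule DERIV_diff[OF deriv])
  ultimately have "P x - y = 0"
    by (intro DERIV_local_min[where d = 1]) auto
  then show ?thesis by simp
qed

lemma has_real_derivative_glue:
  assumes "(f has_real_derivative D) (at a within {..a})"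
    and "(f has_real_derivative D) (at a within {a..})"
  shows "(f has_real_derivative D) (at a)"
proof -
  have "{..a} \<union> {a..} = (UNIV :: real set)" by auto
  then show ?thesis
    using Lim_Un[OF assms[unfolded has_field_derivative_iff]] by (simp add: has_field_derivative_iff)
qed

lemma hop_prox_eq_0:
  assumes "c > 0" "0 < p" "p \<le> 1" "\<bar>t\<bar> \<le> c"
  shows "hop_prox p c t = 0"
proof (cases "t = 0")
  case False
  then have "\<bar>t\<bar> = \<bar>t\<bar> powr (2 - p) * \<bar>t\<bar> powr (p - 1)"
    by (simp add: powr_add[symmetric])
  also have "\<dots> \<le> c powr (2 - p) * \<bar>t\<bar> powr (p - 1)"
    using False assms by (intro mult_right_mono powr_mono2) auto
  finally show ?thesis by (simp add: hop_prox_def)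
qed (simp add: hop_prox_def)

lemma hop_prox_gt:
  assumes "c > 0" "0 < p" "p \<le> 1" "t > c"
  shows "hop_prox p c t = t - c powr (2 - p) * t powr (p - 1)"
proof -
  have "c powr (2 - p) * t powr (p - 1) \<le> t powr (2 - p) * t powr (p - 1)"
    using assms by (intro mult_right_mono powr_mono2) auto
  also have "\<dots> = t" using assms by (simp add: powr_add[symmetric])
  finally show ?thesis using assms by (simp add: hop_prox_def)
qed

lemma hop_prox_minus: "hop_prox p c (- t) = - hop_prox p c t"
  by (simp add: hop_prox_def)

lemma hop_prox_nonneg: "t \<ge> 0 \<Longrightarrow> hop_prox p c t \<ge> 0"
  by (simp add: hop_prox_def)

lemma hop_prox_mono_nonneg:
  assumes "c > 0" "0 < p" "p \<le> 1" "0 \<le> a" "a \<le> b"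
  shows "hop_prox p c a \<le> hop_prox p c b"
proof (cases "a = 0")
  case True
  then show ?thesis using hop_prox_nonneg[of b p c] assms by (simp add: hop_prox_def)
next
  case False
  then have "b powr (p - 1) \<le> a powr (p - 1)"
    using assms by (intro powr_mono2') auto
  then have "c powr (2 - p) * b powr (p - 1) \<le> c powr (2 - p) * a powr (p - 1)"
    by (intro mult_left_mono) auto
  then have "max 0 (a - c powr (2 - p) * a powr (p - 1)) \<le> max 0 (b - c powr (2 - p) * b powr (p - 1))"
    using \<open>a \<le> b\<close> by linarith
  then show ?thesis using False assms by (simp add: hop_prox_def)
qed

lemma mono_hop_prox:
  assumes "c > 0" "0 < p" "p \<le> 1"
  shows "mono (hop_prox p c)"
proof
  fix a b :: real
  assume "a \<le> b"
  consider "0 \<le> a" | "b \<le> 0" | "a < 0" "0 < b" by linarith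
  then show "hop_prox p c a \<le> hop_prox p c b"
  proof cases
    case 1
    then show ?thesis using hop_prox_mono_nonneg assms \<open>a \<le> b\<close> by blast
  next
    case 2
    then have "hop_prox p c (- b) \<le> hop_prox p c (- a)"
      using hop_prox_mono_nonneg[of c p "- b" "- a"] assms \<open>a \<le> b\<close> by auto
    then show ?thesis by (simp add: hop_prox_minus)
  next
    case 3
    then have "hop_prox p c (- a) \<ge> 0" "hop_prox p c b \<ge> 0" using hop_prox_nonneg by auto
    then show ?thesis by (simp add: hop_prox_minus)
  qed
qed

definition hop_residual :: "real \<Rightarrow> real \<Rightarrow> real \<Rightarrow> real" where
  "hop_residual p c t = t\<^sup>2 / 2 - hop p c t"

definition hop_residual_outer :: "real \<Rightarrow> real \<Rightarrow> real \<Rightarrow> real" where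
  "hop_residual_outer p c t = t\<^sup>2 / 2 - (1 / p) * c powr (2 - p) * t powr p - c\<^sup>2 / 2 + (1 / p) * c\<^sup>2"

lemma hop_residual_minus: "hop_residual p c (- t) = hop_residual p c t"
  by (simp add: hop_residual_def hop_def)

lemma hop_residual_eq_0: "\<bar>t\<bar> \<le> c \<Longrightarrow> hop_residual p c t = 0"
  by (simp add: hop_residual_def hop_def)

lemma hop_residual_eq_outer:
  assumes "c > 0" "0 < p" "c \<le> t"
  shows "hop_residual p c t = hop_residual_outer p c t"
proof (cases "t = c")
  case True
  have "c powr (2 - p) * c powr p = c\<^sup>2" using assms by (simp add: powr_add[symmetric])
  then show ?thesis using True assms by (simp add: hop_residual_def hop_residual_outer_def hop_def)
qed (use assms in \<open>simp add: hop_residual_def hop_residual_outer_def hop_def\<close>)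

lemma hop_residual_outer_deriv:
  assumes "t > 0" "0 < p"
  shows "(hop_residual_outer p c has_real_derivative (t - c powr (2 - p) * t powr (p - 1))) (at t)"
proof -
  have "((\<lambda>t. t\<^sup>2 / 2 - (1 / p) * c powr (2 - p) * t powr p - c\<^sup>2 / 2 + (1 / p) * c\<^sup>2)
     has_real_derivative (2 * t / 2 - (1 / p) * c powr (2 - p) * (p * t powr (p - 1)))) (at t)"
    using assms by (auto intro!: derivative_eq_intros)
  then show ?thesis using assms unfolding hop_residual_outer_def by simp
qed

lemma hop_residual_deriv_at_c:
  assumes "c > 0" "0 < p"
  shows "(hop_residual p c has_real_derivative 0) (at c)"
proof (rule has_real_derivative_glue)
  show "(hop_residual p c has_real_derivative 0) (at c within {..c})"
    using DERIV_const[of 0 "at c within {..c}"]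
    by (rule has_field_derivative_transform_within[where d = c])
      (use assms in \<open>auto simp: dist_real_def hop_residual_eq_0\<close>)
  have "c - c powr (2 - p) * c powr (p - 1) = 0"
    using assms by (simp add: powr_add[symmetric])
  then have "(hop_residual_outer p c has_real_derivative 0) (at c within {c..})"
    using hop_residual_outer_deriv[of c p c] assms by (simp add: has_field_derivative_at_within)
  then show "(hop_residual p c has_real_derivative 0) (at c within {c..})"
    by (rule has_field_derivative_transform_within[where d = 1])
      (use assms in \<open>auto simp: hop_residual_eq_outer\<close>)
qed

lemma hop_residual_deriv_nonneg:
  assumes "c > 0" "0 < p" "p \<le> 1" "t \<ge> 0"
  shows "(hop_residual p c has_real_derivative hop_prox p c t) (at t)"
proof -
  consider "t < c" | "t = c" | "t > c" by linarith
  then show ?thesis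
  proof cases
    case 1
    have "(hop_residual p c has_real_derivative 0) (at t)"
      using DERIV_const[of 0 "at t"]
      by (rule has_field_derivative_transform_within_open[where S = "{- c<..<c}"])
        (use 1 assms in \<open>auto simp: hop_residual_eq_0\<close>)
    then show ?thesis using hop_prox_eq_0[of c p t] 1 assms by simp
  next
    case 2
    then show ?thesis
      using hop_residual_deriv_at_c hop_prox_eq_0[of c p c] assms by simp
  next
    case 3
    have "(hop_residual_outer p c has_real_derivative hop_prox p c t) (at t)"
      using hop_residual_outer_deriv[of t p c] hop_prox_gt[of c p t] 3 assms by simp
    then show ?thesis
      by (rule has_field_derivative_transform_within_open[where S = "{c<..}"])
        (use 3 assms in \<open>auto simp: hop_residual_eq_outer\<close>)
  qed
qed

lemma hop_residual_deriv:
  assumes "c > 0" "0 < p" "p \<le> 1"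
  shows "(hop_residual p c has_real_derivative hop_prox p c t) (at t)"
proof (cases "t \<ge> 0")
  case True
  then show ?thesis using hop_residual_deriv_nonneg assms by blast
next
  case False
  have "(hop_residual p c has_real_derivative hop_prox p c (- t)) (at (- t))"
    using hop_residual_deriv_nonneg[of c p "- t"] False assms by simp
  then have "((\<lambda>s. hop_residual p c (- s)) has_real_derivative hop_prox p c (- t) * (- 1)) (at t)"
    by (rule DERIV_chain2) (auto intro!: derivative_eq_intros)
  then show ?thesis by (simp add: hop_residual_minus hop_prox_minus)
qed

theorem mainTheorem1:
  fixes p c x :: real
  assumes "c > 0" and "0 < p" and "p \<le> 1"
  shows "ereal (hop p c x) = ereal ((x - hop_prox p c x)\<^sup>2 / 2) + hop_reg p c (hop_prox p c x)
     \<and> (\<forall>y. ereal ((x - hop_prox p c x)\<^sup>2 / 2) + hop_reg p c (hop_prox p c x)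
              \<le> ereal ((x - y)\<^sup>2 / 2) + hop_reg p c y)
     \<and> (\<forall>y. ereal ((x - y)\<^sup>2 / 2) + hop_reg p c y
              = ereal ((x - hop_prox p c x)\<^sup>2 / 2) + hop_reg p c (hop_prox p c x)
            \<longrightarrow> y = hop_prox p c x)"
proof -
  have reg: "hop_reg p c = implicit_reg (hop p c)"
    by (simp add: fun_eq_iff hop_reg_def implicit_reg_def)
  have deriv: "((\<lambda>t. t\<^sup>2 / 2 - hop p c t) has_real_derivative hop_prox p c t) (at t)" for t
    using hop_residual_deriv[OF assms] unfolding hop_residual_def[abs_def] .
  have at_prox: "ereal ((x - hop_prox p c x)\<^sup>2 / 2) + hop_reg p c (hop_prox p c x) = ereal (hop p c x)"
    unfolding reg implicit_reg_at_gradient[OF deriv mono_hop_prox[OF assms]] by simp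
  show ?thesis
    unfolding at_prox
    using le_quadratic_plus_implicit_reg[of "hop p c"]
      implicit_reg_minimizer_eq_gradient[of "hop p c", OF deriv]
    by (auto simp: reg)
qed

end
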